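(* Fix constants $\lambda>0$ and $\epsilon>0$. For each $n$, let $k=\frac{\lambda n}{\log n}$ be the number of defectives, and let the defective set $\mathcal{K}\subseteq\{1,\dots,n\}$ be drawn uniformly at random among all subsets of size $k$ (combinatorial prior). Let $$T=(1+\epsilon)\frac{\lambda}{\log^2 2}\,n$$ and form a near-constant tests-per-item design with $T$ tests: each of the $n$ items, independently, draws $L=\frac{T\log 2}{k}$ tests uniformly at random with replacement from the $T$ tests and is included in each drawn test. Then the probability that the COMP decoder outputs exactly $\mathcal{K}$ is $1-o(1)$ as $n\to\infty$.
   Context: $\log$ denotes the natural logarithm. Nonadaptive group testing: a test is a subset of items, and its outcome is positive iff it contains at least one defective item (the logical OR of the defectivity indicators of its items). All tests are fixed before any outcomes are seen. The COMP decoder declares every item that appears in at least one negative test to be nondefective, and declares all remaining items defective. *)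

theory Defs
  imports "HOL-Probability.Probability"
begin

text \<open>Items are 1..n, tests are 0..<T. A design is a map D from items to the
list of the L tests drawn (with replacement) by that item; item i is in test t
iff t is in set (D i).\<close>

definition test_positive :: "(nat \<Rightarrow> nat list) \<Rightarrow> nat set \<Rightarrow> nat \<Rightarrow> bool" where
  "test_positive D K t \<longleftrightarrow> (\<exists>i\<in>K. t \<in> set (D i))"

definition comp_decode :: "nat \<Rightarrow> nat \<Rightarrow> (nat \<Rightarrow> nat list) \<Rightarrow> nat set \<Rightarrow> nat set" where
  "comp_decode n T D K =
     {i \<in> {1..n}. \<not> (\<exists>t<T. t \<in> set (D i) \<and> \<not> test_positive D K t)}"

definition defective_prior :: "nat \<Rightarrow> nat \<Rightarrow> nat set pmf" where
  "defective_prior n k = pmf_of_set {K. K \<subseteq> {1..n} \<and> card K = k}"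

text \<open>Near-constant tests-per-item design: each item independently draws L
tests uniformly with replacement from the T tests (uniform over all
assignments of length-L sequences of tests to items).\<close>
definition nc_design :: "nat \<Rightarrow> nat \<Rightarrow> nat \<Rightarrow> (nat \<Rightarrow> nat list) pmf" where
  "nc_design n T L =
     pmf_of_set (PiE {1..n} (\<lambda>_. {xs. set xs \<subseteq> {..<T} \<and> length xs = L}))"

definition comp_success_prob :: "nat \<Rightarrow> nat \<Rightarrow> nat \<Rightarrow> nat \<Rightarrow> real" where
  "comp_success_prob n k T L =
     measure_pmf.prob (pair_pmf (defective_prior n k) (nc_design n T L))
       {(K, D). comp_decode n T D K = K}"

definition num_def :: "real \<Rightarrow> nat \<Rightarrow> nat" where
  "num_def lam n = nat \<lfloor>lam * real n / ln (real n)\<rfloor>"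

definition num_tests :: "real \<Rightarrow> real \<Rightarrow> nat \<Rightarrow> nat" where
  "num_tests lam eps n = nat \<lfloor>(1 + eps) * lam / (ln 2)\<^sup>2 * real n\<rfloor>"

definition tests_per_item :: "real \<Rightarrow> real \<Rightarrow> nat \<Rightarrow> nat" where
  "tests_per_item lam eps n =
     nat \<lceil>real (num_tests lam eps n) * ln 2 / real (num_def lam n)\<rceil>"

end

theory Submission
  imports Defs "HOL-Real_Asymp.Real_Asymp"
begin

(* COMP errs only if some nondefective item has all of its L tests among the positive ones.
   With k defectives the number of negative tests has mean T (1 - 1/T)^(L k), which tends to T/2,
   and, its indicators being negatively correlated, variance at most T; so by Chebyshev a fraction
   at least 1 - r of the tests is negative with high probability, for any fixed r > 1/2. Then a fixed
   nondefective item is masked with probability at most r^L, and since L ~ (1 + eps) log_2 n, the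
   union bound n r^L tends to 0 as soon as r < 2 powr (-1 / (1 + eps)). *)

lemma sum_card_diff_moments:
  fixes U :: "'a \<Rightarrow> 'b set" and f :: "nat \<Rightarrow> real"
  assumes S: "finite S" and B: "finite B"
    and avoid: "\<And>A. A \<subseteq> B \<Longrightarrow> real (card {x\<in>S. U x \<inter> A = {}}) = f (card A)"
  shows "(\<Sum>x\<in>S. real (card (B - U x))) = real (card B) * f 1"
    and "(\<Sum>x\<in>S. real (card (B - U x)) ^ 2) =
           real (card B) * f 1 + real (card B) * (real (card B) - 1) * f 2"
proof -
  have indicators: "real (card (B - U x)) = (\<Sum>t\<in>B. of_bool (U x \<inter> {t} = {}))" for x
    using B by (simp add: Int_def Diff_eq Compl_eq)
  have avoid_sum: "(\<Sum>x\<in>S. of_bool (U x \<inter> A = {})) = f (card A)" if "A \<subseteq> B" for A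
    using S avoid[OF that] by (simp add: Int_def conj_commute)
  have "(\<Sum>x\<in>S. real (card (B - U x))) = (\<Sum>t\<in>B. \<Sum>x\<in>S. of_bool (U x \<inter> {t} = {}))"
    unfolding indicators by (rule sum.swap)
  also have "\<dots> = (\<Sum>t\<in>B. f (card {t}))"
    by (intro sum.cong refl avoid_sum) auto
  finally show "(\<Sum>x\<in>S. real (card (B - U x))) = real (card B) * f 1"
    by simp
  have "(\<Sum>x\<in>S. real (card (B - U x)) ^ 2) =
        (\<Sum>x\<in>S. \<Sum>s\<in>B. \<Sum>t\<in>B. of_bool (U x \<inter> {s, t} = {}))"
    unfolding indicators power2_eq_square sum_product
    by (intro sum.cong refl) auto
  also have "\<dots> = (\<Sum>s\<in>B. \<Sum>t\<in>B. \<Sum>x\<in>S. of_bool (U x \<inter> {s, t} = {}))"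
    by (subst sum.swap) (simp only: sum.swap[of _ S])
  also have "\<dots> = (\<Sum>s\<in>B. \<Sum>t\<in>B. f (card {s, t}))"
    by (intro sum.cong refl avoid_sum) auto
  also have "\<dots> = (\<Sum>s\<in>B. f 1 + (real (card B) - 1) * f 2)"
  proof (intro sum.cong refl)
    fix s assume s: "s \<in> B"
    have "(\<Sum>t\<in>B - {s}. f (card {s, t})) = (\<Sum>t\<in>B - {s}. f 2)"
      by (intro sum.cong refl) (auto simp: numeral_2_eq_2)
    then have "(\<Sum>t\<in>B. f (card {s, t})) = f 1 + (\<Sum>t\<in>B - {s}. f 2)"
      using B s by (simp add: sum.remove[of B s])
    moreover have "card B \<ge> 1"
      using B s by (auto simp: Suc_le_eq card_gt_0_iff)
    ultimately show "(\<Sum>t\<in>B. f (card {s, t})) = f 1 + (real (card B) - 1) * f 2"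
      using B s by simp
  qed
  finally show "(\<Sum>x\<in>S. real (card (B - U x)) ^ 2) =
                  real (card B) * f 1 + real (card B) * (real (card B) - 1) * f 2"
    by (simp add: algebra_simps)
qed

lemma card_deviation_le:
  fixes f :: "'a \<Rightarrow> real"
  assumes "finite S" and "d > 0"
  shows "real (card {x\<in>S. d \<le> \<bar>f x\<bar>}) * d\<^sup>2 \<le> (\<Sum>x\<in>S. (f x)\<^sup>2)"
proof -
  have "real (card {x\<in>S. d \<le> \<bar>f x\<bar>}) * d\<^sup>2 = (\<Sum>x\<in>{x\<in>S. d \<le> \<bar>f x\<bar>}. d\<^sup>2)"
    by simp
  also have "\<dots> \<le> (\<Sum>x\<in>{x\<in>S. d \<le> \<bar>f x\<bar>}. (f x)\<^sup>2)"
    using \<open>d > 0\<close> by (intro sum_mono) (metis order_less_le power2_abs power_mono mem_Collect_eq)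
  also have "\<dots> \<le> (\<Sum>x\<in>S. (f x)\<^sup>2)"
    using \<open>finite S\<close> by (intro sum_mono2) auto
  finally show ?thesis .
qed

lemma pair_pmf_of_set:
  assumes "finite A" "A \<noteq> {}" "finite B" "B \<noteq> {}"
  shows "pair_pmf (pmf_of_set A) (pmf_of_set B) = pmf_of_set (A \<times> B)"
proof (rule pmf_eqI)
  fix x :: "'a \<times> 'b"
  show "pmf (pair_pmf (pmf_of_set A) (pmf_of_set B)) x = pmf (pmf_of_set (A \<times> B)) x"
    using assms by (cases x) (simp add: pmf_pair card_cartesian_product indicator_def)
qed

definition tuples :: "nat \<Rightarrow> 'a set \<Rightarrow> 'a list set" where
  "tuples L A = {xs. set xs \<subseteq> A \<and> length xs = L}"

definition designs :: "nat \<Rightarrow> nat \<Rightarrow> nat \<Rightarrow> (nat \<Rightarrow> nat list) set" where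
  "designs n T L = (\<Pi>\<^sub>E i\<in>{1..n}. tuples L {..<T})"

definition positive_tests :: "nat set \<Rightarrow> (nat \<Rightarrow> nat list) \<Rightarrow> nat set" where
  "positive_tests K D = (\<Union>i\<in>K. set (D i))"

definition num_negative :: "nat \<Rightarrow> nat set \<Rightarrow> (nat \<Rightarrow> nat list) \<Rightarrow> nat" where
  "num_negative T K D = card ({..<T} - positive_tests K D)"

lemma finite_tuples: "finite A \<Longrightarrow> finite (tuples L A)"
  unfolding tuples_def by (rule finite_lists_length_eq)

lemma card_tuples: "finite A \<Longrightarrow> card (tuples L A) = card A ^ L"
  unfolding tuples_def by (rule card_lists_length_eq)

lemma finite_designs: "finite (designs n T L)"
  unfolding designs_def by (auto intro!: finite_PiE finite_tuples)

lemma card_designs: "card (designs n T L) = T ^ (L * n)"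
  unfolding designs_def by (simp add: card_PiE card_tuples power_mult)

lemma nc_design_eq_pmf_of_set: "nc_design n T L = pmf_of_set (designs n T L)"
  unfolding nc_design_def designs_def tuples_def ..

lemma positive_tests_subset:
  "K \<subseteq> {1..n} \<Longrightarrow> D \<in> designs n T L \<Longrightarrow> positive_tests K D \<subseteq> {..<T}"
  unfolding positive_tests_def designs_def tuples_def by (auto simp: PiE_iff)

lemma designs_avoiding_eq_PiE:
  assumes "K \<subseteq> {1..n}"
  shows "{D \<in> designs n T L. positive_tests K D \<inter> A = {}} =
         (\<Pi>\<^sub>E i\<in>{1..n}. if i \<in> K then tuples L ({..<T} - A) else tuples L {..<T})"
proof (intro equalityI subsetI)
  fix D assume "D \<in> {D \<in> designs n T L. positive_tests K D \<inter> A = {}}"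
  then show "D \<in> (\<Pi>\<^sub>E i\<in>{1..n}. if i \<in> K then tuples L ({..<T} - A) else tuples L {..<T})"
    unfolding designs_def positive_tests_def tuples_def by (auto simp: PiE_iff)
next
  fix D assume D: "D \<in> (\<Pi>\<^sub>E i\<in>{1..n}. if i \<in> K then tuples L ({..<T} - A) else tuples L {..<T})"
  have "D i \<in> tuples L {..<T}" if "i \<in> {1..n}" for i
    using PiE_mem[OF D that] unfolding tuples_def by (auto split: if_splits)
  moreover have "set (D i) \<inter> A = {}" if "i \<in> K" for i
    using PiE_mem[OF D] that assms unfolding tuples_def by fastforce
  ultimately show "D \<in> {D \<in> designs n T L. positive_tests K D \<inter> A = {}}"
    using D unfolding designs_def positive_tests_def by (auto simp: PiE_iff)
qed

lemma card_designs_avoiding: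
  assumes K: "K \<subseteq> {1..n}" and A: "A \<subseteq> {..<T}" and T: "T > 0"
  shows "real (card {D \<in> designs n T L. positive_tests K D \<inter> A = {}}) =
         real (card (designs n T L)) * (1 - real (card A) / real T) ^ (L * card K)"
proof -
  have "finite A"
    using A finite_subset by blast
  have "card {D \<in> designs n T L. positive_tests K D \<inter> A = {}} =
        (\<Prod>i\<in>{1..n}. card (if i \<in> K then tuples L ({..<T} - A) else tuples L {..<T}))"
    by (simp add: designs_avoiding_eq_PiE[OF K] card_PiE)
  also have "\<dots> = (\<Prod>i\<in>{1..n}. if i \<in> K then (T - card A) ^ L else T ^ L)"
    using A \<open>finite A\<close> by (intro prod.cong) (auto simp: card_tuples card_Diff_subset)
  also have "\<dots> = ((T - card A) ^ L) ^ card K * (T ^ L) ^ card ({1..n} - K)"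
    using K by (simp add: prod.If_cases Int_absorb1 Diff_eq[symmetric])
  also have "card ({1..n} - K) = n - card K"
    using K by (simp add: card_Diff_subset finite_subset)
  finally have "real (card {D \<in> designs n T L. positive_tests K D \<inter> A = {}}) =
      (real T - real (card A)) ^ (L * card K) * real T ^ (L * (n - card K))"
    using card_mono[OF _ A] by (simp add: power_mult)
  also have "\<dots> = real T ^ (L * n) * (1 - real (card A) / real T) ^ (L * card K)"
  proof -
    have "card K \<le> n"
      using card_mono[OF _ K] by simp
    then have "L * n = L * card K + L * (n - card K)"
      by (simp add: algebra_simps)
    then show ?thesis
      using T by (simp add: power_add diff_divide_distrib[symmetric] field_simps)
  qed
  finally show ?thesis
    by (simp add: card_designs)
qed

lemma sum_sq_deviation_negative_tests_le:
  assumes K: "K \<subseteq> {1..n}" and T: "T \<ge> 2"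
  shows "(\<Sum>D\<in>designs n T L. (real (num_negative T K D) - real T * (1 - 1 / real T) ^ (L * card K))\<^sup>2)
         \<le> real (card (designs n T L)) * real T"
proof -
  define N where "N = real (card (designs n T L))"
  define m where "m = L * card K"
  define Z where "Z D = real (num_negative T K D)" for D
  define q1 where "q1 = (1 - 1 / real T) ^ m"
  define q2 where "q2 = (1 - 2 / real T) ^ m"
  have avoid: "real (card {D \<in> designs n T L. positive_tests K D \<inter> A = {}}) =
               N * (1 - real (card A) / real T) ^ m" if "A \<subseteq> {..<T}" for A
    unfolding N_def m_def using card_designs_avoiding[OF K that] T by simp
  note moments = sum_card_diff_moments[OF finite_designs finite_lessThan avoid]
  have sum_Z: "(\<Sum>D\<in>designs n T L. Z D) = N * (real T * q1)"
    using moments(1) by (simp add: Z_def num_negative_def q1_def)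
  have sum_Z2: "(\<Sum>D\<in>designs n T L. (Z D)\<^sup>2) = N * (real T * q1 + real T * (real T - 1) * q2)"
    using moments(2) by (simp add: Z_def num_negative_def q1_def q2_def algebra_simps)
  have "(\<Sum>D\<in>designs n T L. (Z D - real T * q1)\<^sup>2)
        = (\<Sum>D\<in>designs n T L. (Z D)\<^sup>2) - 2 * (real T * q1) * (\<Sum>D\<in>designs n T L. Z D)
          + N * (real T * q1)\<^sup>2"
    by (simp add: N_def power2_diff sum.distrib sum_subtractf sum_distrib_left mult_ac)
  also have "\<dots> = N * (real T * q1 + (real T)\<^sup>2 * (q2 - q1\<^sup>2) - real T * q2)"
    unfolding sum_Z sum_Z2 by (simp add: power2_eq_square algebra_simps)
  also have "\<dots> \<le> N * real T"
  proof -
    \<comment> \<open>Two distinct tests are negative together with probability q2 \<le> q1^2 (negative correlation).\<close>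
    have "(1 - 1 / real T)\<^sup>2 = 1 - 2 / real T + (1 / real T)\<^sup>2"
      by (simp add: power2_diff)
    then have "1 - 2 / real T \<le> (1 - 1 / real T)\<^sup>2"
      by simp
    moreover have "0 \<le> 1 - 2 / real T"
      using T by simp
    ultimately have "q2 \<le> ((1 - 1 / real T)\<^sup>2) ^ m"
      unfolding q2_def by (rule power_mono)
    also have "\<dots> = q1\<^sup>2"
      unfolding q1_def by (simp add: power2_eq_square power_mult_distrib)
    finally have "(real T)\<^sup>2 * (q2 - q1\<^sup>2) \<le> 0"
      by (simp add: mult_nonneg_nonpos)
    moreover have "0 \<le> real T * q2"
      unfolding q2_def using T by simp
    moreover have "real T * q1 \<le> real T"
      unfolding q1_def using T by (simp add: power_le_one)
    ultimately have "real T * q1 + (real T)\<^sup>2 * (q2 - q1\<^sup>2) - real T * q2 \<le> real T"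
      by linarith
    then show ?thesis
      unfolding N_def by (intro mult_left_mono) auto
  qed
  finally show ?thesis
    unfolding Z_def q1_def m_def N_def .
qed

lemma comp_decode_ne_imp_masked:
  assumes K: "K \<subseteq> {1..n}" and D: "D \<in> designs n T L" and ne: "comp_decode n T D K \<noteq> K"
  obtains i where "i \<in> {1..n} - K" and "set (D i) \<subseteq> positive_tests K D"
proof -
  have "K \<subseteq> comp_decode n T D K"
    using K unfolding comp_decode_def test_positive_def by auto
  with ne obtain i where i: "i \<in> comp_decode n T D K" "i \<notin> K"
    by blast
  then have "i \<in> {1..n}"
    unfolding comp_decode_def by auto
  moreover have "set (D i) \<subseteq> {..<T}"
    using D \<open>i \<in> {1..n}\<close> unfolding designs_def tuples_def by auto
  ultimately have "set (D i) \<subseteq> positive_tests K D"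
    using i unfolding comp_decode_def test_positive_def positive_tests_def by blast
  with i \<open>i \<in> {1..n}\<close> show thesis
    using that by blast
qed

lemma card_designs_masking_le:
  assumes K: "K \<subseteq> {1..n}" and i: "i \<in> {1..n} - K" and u: "0 \<le> u" and T: "T > 0"
  shows "real (card {D \<in> designs n T L. set (D i) \<subseteq> positive_tests K D
                        \<and> real (card (positive_tests K D)) \<le> u})
         \<le> real (card (designs n T L)) * (u / real T) ^ L"
proof -
  define others where "others = (\<Pi>\<^sub>E j\<in>{1..n} - {i}. tuples L {..<T})"
  define small where "small = {D' \<in> others. real (card (positive_tests K D')) \<le> u}"
  define masked where "masked = {D \<in> designs n T L. set (D i) \<subseteq> positive_tests K D
                                   \<and> real (card (positive_tests K D)) \<le> u}"
  have fin_K: "finite K"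
    using K finite_subset by blast
  have fin_pos: "finite (positive_tests K D)" for D
    using fin_K unfolding positive_tests_def by simp
  have pos_upd: "positive_tests K (D(i := xs)) = positive_tests K D" for D xs
    using i unfolding positive_tests_def by (intro SUP_cong) auto
  have fin_others: "finite others"
    unfolding others_def by (auto intro!: finite_PiE finite_tuples)
  then have fin_small: "finite small"
    unfolding small_def by simp
  have "masked \<subseteq> (\<lambda>(D', xs). D'(i := xs)) ` (SIGMA D':small. tuples L (positive_tests K D'))"
  proof
    fix D assume D: "D \<in> masked"
    then have "D(i := undefined) \<in> small" "D i \<in> tuples L (positive_tests K D)"
      using i pos_upd unfolding masked_def small_def others_def designs_def tuples_def
      by (auto simp: PiE_iff)
    then show "D \<in> (\<lambda>(D', xs). D'(i := xs)) ` (SIGMA D':small. tuples L (positive_tests K D'))"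
      using pos_upd by (intro image_eqI[of _ _ "(D(i := undefined), D i)"]) auto
  qed
  then have "card masked \<le> card (SIGMA D':small. tuples L (positive_tests K D'))"
    using fin_small by (intro surj_card_le) (auto intro!: finite_SigmaI finite_tuples fin_pos)
  also have "\<dots> = (\<Sum>D'\<in>small. card (positive_tests K D') ^ L)"
    using fin_small by (simp add: card_SigmaI finite_tuples fin_pos card_tuples)
  finally have "real (card masked) \<le> real (\<Sum>D'\<in>small. card (positive_tests K D') ^ L)"
    by (rule of_nat_mono)
  also have "\<dots> = (\<Sum>D'\<in>small. real (card (positive_tests K D')) ^ L)"
    by simp
  also have "\<dots> \<le> (\<Sum>D'\<in>small. u ^ L)"
    by (intro sum_mono power_mono) (auto simp: small_def)
  also have "\<dots> \<le> real (card others) * u ^ L"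
    using u fin_others by (auto simp: small_def intro!: mult_right_mono card_mono)
  also have "\<dots> = real (card (designs n T L)) * (u / real T) ^ L"
  proof -
    have "L * n = L * (n - 1) + L"
      using i by (cases n) auto
    then show ?thesis
      using i T by (simp add: others_def card_designs card_PiE card_tuples power_mult power_add power_divide)
  qed
  finally show ?thesis
    unfolding masked_def .
qed

lemma comp_failures_subset:
  assumes K: "K \<subseteq> {1..n}" and r: "1 - r + \<delta> \<le> (1 - 1 / real T) ^ (L * card K)"
  shows "{D \<in> designs n T L. comp_decode n T D K \<noteq> K} \<subseteq>
           {D \<in> designs n T L. \<delta> * real T \<le>
              \<bar>real (num_negative T K D) - real T * (1 - 1 / real T) ^ (L * card K)\<bar>}
         \<union> (\<Union>i\<in>{1..n} - K. {D \<in> designs n T L. set (D i) \<subseteq> positive_tests K D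
                                   \<and> real (card (positive_tests K D)) \<le> r * real T})"
    (is "_ \<subseteq> ?deviating \<union> ?masked")
proof
  fix D assume "D \<in> {D \<in> designs n T L. comp_decode n T D K \<noteq> K}"
  then have D: "D \<in> designs n T L" and ne: "comp_decode n T D K \<noteq> K"
    by auto
  obtain i where i: "i \<in> {1..n} - K" "set (D i) \<subseteq> positive_tests K D"
    using comp_decode_ne_imp_masked[OF K D ne] .
  show "D \<in> ?deviating \<union> ?masked"
  proof (cases "real (card (positive_tests K D)) \<le> r * real T")
    case True
    then show ?thesis
      using D i by blast
  next
    case False
    have sub: "positive_tests K D \<subseteq> {..<T}"
      using positive_tests_subset[OF K D] .
    then have "real (num_negative T K D) = real T - real (card (positive_tests K D))"
      using card_mono[OF finite_lessThan sub]
      by (simp add: num_negative_def card_Diff_subset finite_subset of_nat_diff)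
    also have "\<dots> < real T * (1 - r)"
      using False by (simp add: algebra_simps)
    also have "\<dots> \<le> real T * ((1 - 1 / real T) ^ (L * card K) - \<delta>)"
      using r by (intro mult_left_mono) auto
    also have "\<dots> = real T * (1 - 1 / real T) ^ (L * card K) - \<delta> * real T"
      by (simp add: algebra_simps)
    finally have "\<delta> * real T \<le> \<bar>real (num_negative T K D) - real T * (1 - 1 / real T) ^ (L * card K)\<bar>"
      by linarith
    then show ?thesis
      using D by blast
  qed
qed

lemma card_comp_failures_le:
  assumes K: "K \<subseteq> {1..n}" and T: "T \<ge> 2" and \<delta>: "\<delta> > 0" and r: "r \<ge> 0"
    and r_\<delta>: "1 - r + \<delta> \<le> (1 - 1 / real T) ^ (L * card K)"
  shows "real (card {D \<in> designs n T L. comp_decode n T D K \<noteq> K})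
         \<le> real (card (designs n T L)) * (1 / (\<delta>\<^sup>2 * real T) + real n * r ^ L)"
proof -
  define N where "N = real (card (designs n T L))"
  define deviating where "deviating = {D \<in> designs n T L. \<delta> * real T \<le>
      \<bar>real (num_negative T K D) - real T * (1 - 1 / real T) ^ (L * card K)\<bar>}"
  define masked where "masked i = {D \<in> designs n T L. set (D i) \<subseteq> positive_tests K D
                                   \<and> real (card (positive_tests K D)) \<le> r * real T}" for i
  have "card {D \<in> designs n T L. comp_decode n T D K \<noteq> K}
        \<le> card (deviating \<union> (\<Union>i\<in>{1..n} - K. masked i))"
    using comp_failures_subset[OF K r_\<delta>] unfolding deviating_def masked_def
    by (intro card_mono) (auto intro: finite_subset[OF _ finite_designs])
  also have "\<dots> \<le> card deviating + (\<Sum>i\<in>{1..n} - K. card (masked i))"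
    by (intro order.trans[OF card_Un_le] add_left_mono card_UN_le) auto
  finally have "real (card {D \<in> designs n T L. comp_decode n T D K \<noteq> K})
                \<le> real (card deviating) + (\<Sum>i\<in>{1..n} - K. real (card (masked i)))"
    by (simp flip: of_nat_sum of_nat_add)
  moreover have "real (card deviating) \<le> N * (1 / (\<delta>\<^sup>2 * real T))"
  proof -
    have "real (card deviating) * (\<delta> * real T)\<^sup>2 \<le> N * real T"
      unfolding deviating_def N_def using \<delta> T
      by (intro order.trans[OF card_deviation_le sum_sq_deviation_negative_tests_le[OF K T]])
         (auto intro: finite_designs)
    then show ?thesis
      using \<delta> T by (simp add: field_simps power2_eq_square)
  qed
  moreover have "(\<Sum>i\<in>{1..n} - K. real (card (masked i))) \<le> real n * (N * r ^ L)"
  proof -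
    have "(\<Sum>i\<in>{1..n} - K. real (card (masked i))) \<le> (\<Sum>i\<in>{1..n} - K. N * r ^ L)"
      using card_designs_masking_le[OF K _ _, of _ "r * real T" T L] r T
      unfolding masked_def N_def by (intro sum_mono) auto
    also have "\<dots> = real (card ({1..n} - K)) * (N * r ^ L)"
      by simp
    also have "\<dots> \<le> real n * (N * r ^ L)"
      using r card_mono[of "{1..n}" "{1..n} - K"] unfolding N_def by (intro mult_right_mono) auto
    finally show ?thesis .
  qed
  ultimately show ?thesis
    unfolding N_def by (simp add: algebra_simps)
qed

lemma comp_success_prob_ge:
  assumes k: "k \<le> n" and T: "T \<ge> 2" and \<delta>: "\<delta> > 0" and r: "r \<ge> 0"
    and r_\<delta>: "1 - r + \<delta> \<le> (1 - 1 / real T) ^ (L * k)"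
  shows "1 - (1 / (\<delta>\<^sup>2 * real T) + real n * r ^ L) \<le> comp_success_prob n k T L"
proof -
  define Ks where "Ks = {K. K \<subseteq> {1..n} \<and> card K = k}"
  define bound where "bound = 1 / (\<delta>\<^sup>2 * real T) + real n * r ^ L"
  define failures where "failures K = {D \<in> designs n T L. comp_decode n T D K \<noteq> K}" for K
  define N where "N = real (card (designs n T L))"
  have fin_Ks: "finite Ks"
    unfolding Ks_def by (rule finite_subset[of _ "Pow {1..n}"]) auto
  have "Ks \<noteq> {}"
    using obtain_subset_with_card_n[of k "{1..n}"] k unfolding Ks_def by auto
  have "designs n T L \<noteq> {}"
    using T card_designs[of n T L] by (auto simp del: card_designs)
  have "N > 0"
    using T by (simp add: N_def card_designs)
  have success: "comp_success_prob n k T L = 1 - measure_pmf.prob (pmf_of_set (Ks \<times> designs n T L))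
                                          {(K, D). comp_decode n T D K \<noteq> K}"
  proof -
    have "{(K, D). comp_decode n T D K = K} = UNIV - {(K, D). comp_decode n T D K \<noteq> K}"
      by auto
    then show ?thesis
      unfolding comp_success_prob_def defective_prior_def nc_design_eq_pmf_of_set Ks_def[symmetric]
        pair_pmf_of_set[OF fin_Ks \<open>Ks \<noteq> {}\<close> finite_designs \<open>designs n T L \<noteq> {}\<close>]
      using measure_pmf.prob_compl[of "{(K, D). comp_decode n T D K \<noteq> K}"
          "pmf_of_set (Ks \<times> designs n T L)"] by simp
  qed
  have failure: "measure_pmf.prob (pmf_of_set (Ks \<times> designs n T L)) {(K, D). comp_decode n T D K \<noteq> K}
             = (\<Sum>K\<in>Ks. real (card (failures K))) / (real (card Ks) * N)"
  proof -
    have "(Ks \<times> designs n T L) \<inter> {(K, D). comp_decode n T D K \<noteq> K} = (SIGMA K:Ks. failures K)"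
      unfolding failures_def by auto
    then show ?thesis
      using fin_Ks \<open>Ks \<noteq> {}\<close> \<open>designs n T L \<noteq> {}\<close>
      by (simp add: measure_pmf_of_set finite_designs card_cartesian_product N_def failures_def)
  qed
  have "(\<Sum>K\<in>Ks. real (card (failures K))) \<le> (\<Sum>K\<in>Ks. N * bound)"
    unfolding failures_def N_def bound_def Ks_def
    using card_comp_failures_le[OF _ T \<delta> r] r_\<delta> by (intro sum_mono) auto
  then have "(\<Sum>K\<in>Ks. real (card (failures K))) / (real (card Ks) * N) \<le> bound"
    using \<open>N > 0\<close> fin_Ks \<open>Ks \<noteq> {}\<close> by (simp add: divide_le_eq card_gt_0_iff mult_ac)
  then show ?thesis
    unfolding success failure bound_def by simp
qed

lemma tendsto_nat_floor_ratio:
  fixes f g :: "'a \<Rightarrow> real"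
  assumes lim: "((\<lambda>x. f x / g x) \<longlongrightarrow> l) F" and inv: "((\<lambda>x. 1 / g x) \<longlongrightarrow> 0) F"
    and pos: "\<forall>\<^sub>F x in F. 0 \<le> f x \<and> 0 < g x"
  shows "((\<lambda>x. real (nat \<lfloor>f x\<rfloor>) / g x) \<longlongrightarrow> l) F"
proof (rule tendsto_sandwich)
  show "\<forall>\<^sub>F x in F. f x / g x - 1 / g x \<le> real (nat \<lfloor>f x\<rfloor>) / g x"
    using pos by eventually_elim (simp add: diff_divide_distrib[symmetric] divide_right_mono)
  show "\<forall>\<^sub>F x in F. real (nat \<lfloor>f x\<rfloor>) / g x \<le> f x / g x"
    using pos by eventually_elim (simp add: divide_right_mono of_nat_floor)
  show "((\<lambda>x. f x / g x - 1 / g x) \<longlongrightarrow> l) F"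
    using tendsto_diff[OF lim inv] by simp
qed (fact lim)

lemma tendsto_nat_ceiling_ratio:
  fixes f g :: "'a \<Rightarrow> real"
  assumes lim: "((\<lambda>x. f x / g x) \<longlongrightarrow> l) F" and inv: "((\<lambda>x. 1 / g x) \<longlongrightarrow> 0) F"
    and pos: "\<forall>\<^sub>F x in F. 0 \<le> f x \<and> 0 < g x"
  shows "((\<lambda>x. real (nat \<lceil>f x\<rceil>) / g x) \<longlongrightarrow> l) F"
proof (rule tendsto_sandwich)
  show "\<forall>\<^sub>F x in F. f x / g x \<le> real (nat \<lceil>f x\<rceil>) / g x"
    using pos by eventually_elim (simp add: divide_right_mono real_nat_ceiling_ge)
  show "\<forall>\<^sub>F x in F. real (nat \<lceil>f x\<rceil>) / g x \<le> f x / g x + 1 / g x"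
    using pos by eventually_elim (simp add: add_divide_distrib[symmetric] divide_right_mono)
  show "((\<lambda>x. f x / g x + 1 / g x) \<longlongrightarrow> l) F"
    using tendsto_add[OF lim inv] by simp
qed (fact lim)

lemma power_one_minus_inverse_tendsto:
  fixes T :: "'a \<Rightarrow> real" and m :: "'a \<Rightarrow> nat"
  assumes T: "filterlim T at_top F" and m: "((\<lambda>x. real (m x) / T x) \<longlongrightarrow> a) F"
  shows "((\<lambda>x. (1 - 1 / T x) ^ m x) \<longlongrightarrow> exp (- a)) F"
proof -
  have "((\<lambda>t::real. t * ln (1 - 1 / t)) \<longlongrightarrow> -1) at_top"
    by real_asymp
  then have "((\<lambda>x. T x * ln (1 - 1 / T x)) \<longlongrightarrow> -1) F"
    using T by (rule filterlim_compose)
  then have "((\<lambda>x. exp (real (m x) / T x * (T x * ln (1 - 1 / T x)))) \<longlongrightarrow> exp (a * -1)) F"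
    by (intro tendsto_intros m)
  moreover have "\<forall>\<^sub>F x in F. exp (real (m x) / T x * (T x * ln (1 - 1 / T x))) = (1 - 1 / T x) ^ m x"
  proof -
    have "\<forall>\<^sub>F x in F. T x > 1"
      using T by (simp add: filterlim_at_top_dense)
    then show ?thesis
    proof eventually_elim
      case (elim x)
      then have "0 < 1 - 1 / T x"
        by simp
      then show ?case
        using elim by (simp add: exp_of_nat_mult[symmetric] ln_realpow[symmetric])
    qed
  qed
  ultimately show ?thesis
    by (simp add: tendsto_cong)
qed

lemma linear_times_power_tendsto_zero:
  fixes L :: "nat \<Rightarrow> nat"
  assumes L: "(\<lambda>n. real (L n) / ln (real n)) \<longlonglongrightarrow> \<beta>" and r: "0 < r" and \<beta>: "\<beta> * ln r < -1"
  shows "(\<lambda>n. real n * r ^ L n) \<longlonglongrightarrow> 0"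
proof -
  have "(\<lambda>n. 1 + real (L n) / ln (real n) * ln r) \<longlonglongrightarrow> 1 + \<beta> * ln r"
    by (intro tendsto_intros L)
  moreover have "filterlim (\<lambda>n. ln (real n)) at_top sequentially"
    by real_asymp
  ultimately have "filterlim (\<lambda>n. (1 + real (L n) / ln (real n) * ln r) * ln (real n)) at_bot sequentially"
    using \<beta> by (intro filterlim_tendsto_neg_mult_at_bot) auto
  then have "(\<lambda>n. exp ((1 + real (L n) / ln (real n) * ln r) * ln (real n))) \<longlonglongrightarrow> 0"
    by (rule filterlim_compose[OF exp_at_bot])
  moreover have "\<forall>\<^sub>F n in sequentially.
      exp ((1 + real (L n) / ln (real n) * ln r) * ln (real n)) = real n * r ^ L n"
    using eventually_ge_at_top[of 2]
  proof eventually_elim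
    case (elim n)
    then have "(1 + real (L n) / ln (real n) * ln r) * ln (real n) = ln (real n) + real (L n) * ln r"
      by (simp add: field_simps)
    then show ?case
      using elim r by (simp add: exp_add exp_of_nat_mult)
  qed
  ultimately show ?thesis
    by (simp add: tendsto_cong)
qed

lemma comp_success_prob_tendsto_one:
  fixes k T L :: "nat \<Rightarrow> nat"
  assumes k: "\<forall>\<^sub>F n in sequentially. k n \<le> n"
    and T: "filterlim (\<lambda>n. real (T n)) at_top sequentially"
    and p: "(\<lambda>n. (1 - 1 / real (T n)) ^ (L n * k n)) \<longlonglongrightarrow> p"
    and r: "1 - p < r"
    and masking: "(\<lambda>n. real n * r ^ L n) \<longlonglongrightarrow> 0"
  shows "(\<lambda>n. comp_success_prob n (k n) (T n) (L n)) \<longlonglongrightarrow> 1"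
proof -
  define \<delta> where "\<delta> = (r - (1 - p)) / 2"
  have "\<delta> > 0"
    using r by (simp add: \<delta>_def)
  have T2: "\<forall>\<^sub>F n in sequentially. real (T n) \<ge> 2"
    using T unfolding filterlim_at_top by (rule spec)
  have "p \<le> 1"
  proof (rule tendsto_upperbound[OF p _ sequentially_bot])
    show "\<forall>\<^sub>F n in sequentially. (1 - 1 / real (T n)) ^ (L n * k n) \<le> 1"
      using T2 by eventually_elim (auto intro: power_le_one)
  qed
  then have "r \<ge> 0"
    using r by simp
  have "\<forall>\<^sub>F n in sequentially. p - \<delta> < (1 - 1 / real (T n)) ^ (L n * k n)"
    using p \<open>\<delta> > 0\<close> by (intro order_tendstoD(1)) auto
  with k T2 have lower: "\<forall>\<^sub>F n in sequentially.
      1 - (1 / (\<delta>\<^sup>2 * real (T n)) + real n * r ^ L n) \<le> comp_success_prob n (k n) (T n) (L n)"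
  proof eventually_elim
    case (elim n)
    moreover have "1 - r + \<delta> = p - \<delta>"
      by (simp add: \<delta>_def field_simps)
    ultimately have "1 - r + \<delta> \<le> (1 - 1 / real (T n)) ^ (L n * k n)"
      by linarith
    then show ?case
      using elim \<open>\<delta> > 0\<close> \<open>r \<ge> 0\<close> by (intro comp_success_prob_ge) auto
  qed
  have upper: "\<forall>\<^sub>F n in sequentially. comp_success_prob n (k n) (T n) (L n) \<le> 1"
    unfolding comp_success_prob_def by (simp add: measure_pmf.prob_le_1)
  have chebyshev_term: "(\<lambda>n. 1 / (\<delta>\<^sup>2 * real (T n))) \<longlonglongrightarrow> 0"
  proof -
    have "(\<lambda>n. 1 / \<delta>\<^sup>2 * inverse (real (T n))) \<longlonglongrightarrow> 1 / \<delta>\<^sup>2 * 0"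
      by (rule tendsto_mult[OF tendsto_const tendsto_inverse_0_at_top[OF T]])
    then show ?thesis
      by (simp add: inverse_eq_divide)
  qed
  have lower_limit: "(\<lambda>n. 1 - (1 / (\<delta>\<^sup>2 * real (T n)) + real n * r ^ L n)) \<longlonglongrightarrow> 1"
    using tendsto_diff[OF tendsto_const[of "1::real"] tendsto_add[OF chebyshev_term masking]] by simp
  show ?thesis
    by (rule tendsto_sandwich[OF lower upper lower_limit tendsto_const])
qed

lemma num_tests_asymp:
  assumes "0 \<le> (1 + eps) * lam"
  shows "(\<lambda>n. real (num_tests lam eps n) / real n) \<longlonglongrightarrow> (1 + eps) * lam / (ln 2)\<^sup>2"
  unfolding num_tests_def
proof (rule tendsto_nat_floor_ratio)
  show "(\<lambda>n. (1 + eps) * lam / (ln 2)\<^sup>2 * real n / real n) \<longlonglongrightarrow> (1 + eps) * lam / (ln 2)\<^sup>2"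
    by (rule tendsto_eventually) (use eventually_gt_at_top[of 0] in eventually_elim, simp)
  show "(\<lambda>n. 1 / real n) \<longlonglongrightarrow> 0"
    by real_asymp
  show "\<forall>\<^sub>F n in sequentially. 0 \<le> (1 + eps) * lam / (ln 2)\<^sup>2 * real n \<and> 0 < real n"
    using eventually_gt_at_top[of 0] by eventually_elim (use assms in simp)
qed

lemma num_def_asymp:
  assumes "0 \<le> lam"
  shows "(\<lambda>n. real (num_def lam n) / (real n / ln (real n))) \<longlonglongrightarrow> lam"
  unfolding num_def_def
proof (rule tendsto_nat_floor_ratio)
  show "(\<lambda>n. lam * real n / ln (real n) / (real n / ln (real n))) \<longlonglongrightarrow> lam"
    by (rule tendsto_eventually) (use eventually_gt_at_top[of 1] in eventually_elim, simp)
  show "(\<lambda>n. 1 / (real n / ln (real n))) \<longlonglongrightarrow> 0"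
    by real_asymp
  show "\<forall>\<^sub>F n in sequentially. 0 \<le> lam * real n / ln (real n) \<and> 0 < real n / ln (real n)"
    using eventually_gt_at_top[of 1] by eventually_elim (use assms in simp)
qed

lemma eventually_num_def_le:
  assumes "0 < lam"
  shows "\<forall>\<^sub>F n in sequentially. num_def lam n \<le> n"
proof -
  have "\<forall>\<^sub>F n in sequentially. lam * real n / ln (real n) \<le> real n"
    using assms by real_asymp
  then show ?thesis
    by eventually_elim (simp add: num_def_def nat_le_iff floor_le_iff)
qed

lemma num_tests_at_top:
  assumes "0 < (1 + eps) * lam"
  shows "filterlim (\<lambda>n. real (num_tests lam eps n)) at_top sequentially"
proof -
  have "filterlim (\<lambda>n. real (num_tests lam eps n) / real n * real n) at_top sequentially"
    using assms by (intro filterlim_tendsto_pos_mult_at_top[OF num_tests_asymp] filterlim_real_sequentially) auto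
  moreover have "\<forall>\<^sub>F n in sequentially. real (num_tests lam eps n) / real n * real n = real (num_tests lam eps n)"
    using eventually_gt_at_top[of 0] by eventually_elim simp
  ultimately show ?thesis
    by (simp add: filterlim_cong)
qed

lemma num_def_over_num_tests:
  assumes "0 < lam" and "0 < eps"
  shows "(\<lambda>n. real (num_def lam n) / real (num_tests lam eps n)) \<longlonglongrightarrow> 0"
proof -
  have "(\<lambda>n. real (num_def lam n) / (real n / ln (real n)) / (real (num_tests lam eps n) / real n)
           * (1 / ln (real n))) \<longlonglongrightarrow> lam / ((1 + eps) * lam / (ln 2)\<^sup>2) * 0"
    using assms by (intro tendsto_intros num_def_asymp num_tests_asymp) (auto, real_asymp)
  moreover have "\<forall>\<^sub>F n in sequentially.
      real (num_def lam n) / (real n / ln (real n)) / (real (num_tests lam eps n) / real n) * (1 / ln (real n))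
      = real (num_def lam n) / real (num_tests lam eps n)"
    using eventually_gt_at_top[of 1] by eventually_elim (simp add: field_simps)
  ultimately show ?thesis
    by (simp add: tendsto_cong)
qed

lemma eventually_num_def_pos:
  assumes "0 < lam"
  shows "\<forall>\<^sub>F n in sequentially. 0 < num_def lam n"
proof -
  have "\<forall>\<^sub>F n in sequentially. 0 < real (num_def lam n) / (real n / ln (real n))"
    using assms by (intro order_tendstoD(1)[OF num_def_asymp]) auto
  then show ?thesis
    by eventually_elim (rule gr0I, simp)
qed

lemma eventually_num_tests_pos:
  assumes "0 < (1 + eps) * lam"
  shows "\<forall>\<^sub>F n in sequentially. 0 < num_tests lam eps n"
proof -
  have "\<forall>\<^sub>F n in sequentially. 0 < real (num_tests lam eps n)"
    using num_tests_at_top[OF assms] unfolding filterlim_at_top_dense by (rule spec)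
  then show ?thesis
    by simp
qed

lemma tests_per_item_asymp:
  assumes "0 < lam" and "0 < eps"
  shows "(\<lambda>n. real (tests_per_item lam eps n * num_def lam n) / real (num_tests lam eps n)) \<longlonglongrightarrow> ln 2"
proof -
  define k where "k n = real (num_def lam n)" for n
  define T where "T n = real (num_tests lam eps n)" for n
  have "0 < (1 + eps) * lam"
    using assms by simp
  have pos: "\<forall>\<^sub>F n in sequentially. 0 < k n \<and> 0 < T n"
    using eventually_num_def_pos[OF assms(1)] eventually_num_tests_pos[OF \<open>0 < (1 + eps) * lam\<close>]
    by eventually_elim (simp add: k_def T_def)
  have "(\<lambda>n. real (nat \<lceil>T n * ln 2 / k n\<rceil>) / (T n / k n)) \<longlonglongrightarrow> ln 2"
  proof (rule tendsto_nat_ceiling_ratio)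
    show "(\<lambda>n. T n * ln 2 / k n / (T n / k n)) \<longlonglongrightarrow> ln 2"
      by (rule tendsto_eventually) (use pos in eventually_elim, simp)
    show "(\<lambda>n. 1 / (T n / k n)) \<longlonglongrightarrow> 0"
      using num_def_over_num_tests[OF assms] unfolding k_def T_def by simp
    show "\<forall>\<^sub>F n in sequentially. 0 \<le> T n * ln 2 / k n \<and> 0 < T n / k n"
      using pos by eventually_elim simp
  qed
  moreover have "\<forall>\<^sub>F n in sequentially. real (nat \<lceil>T n * ln 2 / k n\<rceil>) / (T n / k n) =
      real (tests_per_item lam eps n * num_def lam n) / real (num_tests lam eps n)"
    using pos by eventually_elim (simp add: tests_per_item_def k_def T_def field_simps)
  ultimately show ?thesis
    by (simp add: tendsto_cong)
qed

lemma tests_per_item_over_ln: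
  assumes "0 < lam" and "0 < eps"
  shows "(\<lambda>n. real (tests_per_item lam eps n) / ln (real n)) \<longlonglongrightarrow> (1 + eps) / ln 2"
proof -
  have "0 < (1 + eps) * lam"
    using assms by simp
  have "\<forall>\<^sub>F n in sequentially.
      real (tests_per_item lam eps n * num_def lam n) / real (num_tests lam eps n)
        * (real (num_tests lam eps n) / real n) / (real (num_def lam n) / (real n / ln (real n)))
      = real (tests_per_item lam eps n) / ln (real n)"
    using eventually_num_def_pos[OF assms(1)] eventually_num_tests_pos[OF \<open>0 < (1 + eps) * lam\<close>]
      eventually_gt_at_top[of 1]
    by eventually_elim (simp add: field_simps)
  moreover have "(\<lambda>n. real (tests_per_item lam eps n * num_def lam n) / real (num_tests lam eps n)
           * (real (num_tests lam eps n) / real n) / (real (num_def lam n) / (real n / ln (real n))))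
        \<longlonglongrightarrow> ln 2 * ((1 + eps) * lam / (ln 2)\<^sup>2) / lam"
    using assms by (intro tendsto_intros tests_per_item_asymp num_tests_asymp num_def_asymp) auto
  moreover have "ln 2 * ((1 + eps) * lam / (ln 2)\<^sup>2) / lam = (1 + eps) / ln 2"
    using assms by (simp add: power2_eq_square)
  ultimately show ?thesis
    by (simp add: tendsto_cong)
qed

theorem theorem2:
  fixes lam eps :: real
  assumes "lam > 0" and "eps > 0"
  shows "(\<lambda>n. comp_success_prob n (num_def lam n) (num_tests lam eps n)
              (tests_per_item lam eps n)) \<longlonglongrightarrow> 1"
proof (rule comp_success_prob_tendsto_one)
  show "\<forall>\<^sub>F n in sequentially. num_def lam n \<le> n"
    using assms(1) by (rule eventually_num_def_le)
  show "filterlim (\<lambda>n. real (num_tests lam eps n)) at_top sequentially"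
    using assms by (intro num_tests_at_top) simp
  show "(\<lambda>n. (1 - 1 / real (num_tests lam eps n)) ^ (tests_per_item lam eps n * num_def lam n))
          \<longlonglongrightarrow> exp (- ln 2)"
    using assms by (intro power_one_minus_inverse_tendsto num_tests_at_top tests_per_item_asymp) simp_all
  \<comment> \<open>Any rate strictly between 1/2 and 2 powr (-1 / (1 + eps)) works.\<close>
  define r where "r = exp (- ln 2 / (1 + eps / 2))"
  have "exp (- ln 2) < r"
    using assms by (simp add: r_def field_simps)
  then show "1 - exp (- ln 2) < r"
    by (simp add: exp_minus)
  have "1 < (1 + eps) / (1 + eps / 2)"
    using assms by (simp add: field_simps)
  then show "(\<lambda>n. real n * r ^ tests_per_item lam eps n) \<longlonglongrightarrow> 0"
    by (intro linear_times_power_tendsto_zero[OF tests_per_item_over_ln[OF assms]]) (simp_all add: r_def)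
qed

end
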